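(* Let $m\in\mathbb N$ and let $f:\mathbb R\to\mathbb R$ be a $2\pi$-periodic function of class $C^{m}$ with zero mean, $\int_0^{2\pi}f(t)\,dt=0$. Then: (a) $$0\le \sum_{k=0}^{m}\mathbf c_{m,k}\int_0^{2\pi}\big(f^{(k)}(t)\big)^2dt\le \frac{1}{(m+1)^2}\sum_{k=0}^{m}\mathbf c_{m,k}\int_0^{2\pi}\big(f^{(k+1)}(t)\big)^2dt.$$ (b) $$0\le \sum_{k=0}^{m-1}\lambda_{m,k}\int_0^{2\pi}\Big[\big(f^{(k+1)}\big)^2-\big(f^{(k)}\big)^2\Big]dt\le \frac{1}{(m+1)^2}\sum_{k=0}^{m-1}\lambda_{m,k}\int_0^{2\pi}\Big[\big(f^{(k+2)}\big)^2-\big(f^{(k+1)}\big)^2\Big]dt.$$ (c) $$0\le S_{m,0}\int_0^{2\pi}\big(\dot f^2-f^2\big)dt+\sum_{k=1}^{m-1}S_{m,k}\int_0^{2\pi}\big(f^{(k+1)}+f^{(k-1)}\big)^2dt$$ $$\le \frac{1}{(m+1)^2}\Big[S_{m,0}\int_0^{2\pi}\big(\dot f^2-f^2\big)dt+\sum_{k=0}^{m-1}S_{m,k}\int_0^{2\pi}\big(f^{(k+2)}+f^{(k)}\big)^2dt\Big].$$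
   Context: $\mathbf c_{m,k}$ are defined by $\prod_{j=1}^{m}(t-j^2)=\sum_{k=0}^m \mathbf c_{m,k}t^k$. $\lambda_{m,k}$ are defined by $P_m(t)=\sum_{k=0}^{m-1}\lambda_{m,k}t^k$ where $P_1(t)=1$ and $P_m(t)=\prod_{j=2}^m(t-j^2)$ for $m\ge2$. $S_{m,0}:=P_m(1)=\prod_{j=2}^m(1-j^2)$ and $S_{m,1},\dots,S_{m,m-1}$ are the coefficients of $\mathcal S_m(t)=\frac{P_m(t)-P_m(1)}{t-1}=\sum_{k=1}^{m-1}S_{m,k}t^{k-1}$. $f^{(k)}$ is the $k$-th derivative, $\dot f=f'$. *)

theory Defs
  imports "HOL-Analysis.Analysis" "HOL-Computational_Algebra.Polynomial"
begin

definition nderiv :: "nat \<Rightarrow> (real \<Rightarrow> real) \<Rightarrow> real \<Rightarrow> real" where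
  "nderiv k f = (deriv ^^ k) f"

definition C_class :: "nat \<Rightarrow> (real \<Rightarrow> real) \<Rightarrow> bool" where
  "C_class m f \<longleftrightarrow>
     (\<forall>k\<le>m. continuous_on UNIV (nderiv k f)) \<and>
     (\<forall>k<m. \<forall>x. nderiv k f differentiable (at x))"

definition cpoly :: "nat \<Rightarrow> real poly" where
  "cpoly m = (\<Prod>j\<in>{1..m}. [:- ((real j)^2), 1:])"

definition cc :: "nat \<Rightarrow> nat \<Rightarrow> real" where
  "cc m k = coeff (cpoly m) k"

definition Ppoly :: "nat \<Rightarrow> real poly" where
  "Ppoly m = (\<Prod>j\<in>{2..m}. [:- ((real j)^2), 1:])"

definition lam :: "nat \<Rightarrow> nat \<Rightarrow> real" where
  "lam m k = coeff (Ppoly m) k"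

definition Spoly :: "nat \<Rightarrow> real poly" where
  "Spoly m = (Ppoly m - [:poly (Ppoly m) 1:]) div [:-1, 1:]"

definition SS :: "nat \<Rightarrow> nat \<Rightarrow> real" where
  "SS m k = (if k = 0 then poly (Ppoly m) 1 else coeff (Spoly m) (k - 1))"

end

theory Submission
  imports Defs "HOL-Library.Periodic_Fun"
begin

text \<open>
  Let e_n = fourier_energy n f be the share of the n-th Fourier mode in the integral of f^2 over
  [0, 2 pi]. Differentiation multiplies e_n by n^2, so by Parseval's identity each of the three
  quantities in (a)-(c) equals sum_n P(n^2) e_n with P(t) = (t - 1^2) ... (t - m^2) = (t - 1) P_m(t),
  and the corresponding right-hand sides equal sum_n n^2 P(n^2) e_n. The zero mean gives e_0 = 0,
  while P(n^2) vanishes for 1 <= n <= m and is positive for n > m. Hence every term of the first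
  series is nonnegative and at most 1/(m+1)^2 times the corresponding term of the second.

  Parseval's identity for continuous periodic functions follows from Bessel's inequality and the
  uniform density of trigonometric polynomials, which comes from the Stone-Weierstrass theorem
  on the unit circle.
\<close>

section \<open>Orthogonality of the trigonometric system\<close>

lemma integral_derivative_eq_diff:
  fixes F F' :: "real \<Rightarrow> real"
  assumes "a \<le> b" and "\<And>x. (F has_real_derivative F' x) (at x)"
  shows "integral {a..b} F' = F b - F a"
proof -
  have "(F' has_integral (F b - F a)) {a..b}"
    using assms by (intro fundamental_theorem_of_calculus)
      (auto simp: has_real_derivative_iff_has_vector_derivative has_vector_derivative_at_within)
  then show ?thesis
    by (rule integral_unique)
qed

lemma integrable_continuous_UNIV:
  fixes g :: "real \<Rightarrow> 'a::banach"
  shows "continuous_on UNIV g \<Longrightarrow> g integrable_on {a..b}"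
  by (rule integrable_continuous_real) (rule continuous_on_subset, auto)

lemma integral_cos_int_freq:
  assumes "w \<in> \<int>"
  shows "integral {0..2*pi} (\<lambda>t. cos (w * t)) = (if w = 0 then 2 * pi else 0)"
proof (cases "w = 0")
  case False
  from assms obtain z where z: "w = of_int z"
    by (rule Ints_cases)
  from False have "integral {0..2*pi} (\<lambda>t. cos (w * t)) = sin (w * (2*pi)) / w - sin (w * 0) / w"
    by (intro integral_derivative_eq_diff) (auto intro!: derivative_eq_intros)
  with False show ?thesis
    using sin_int_2pin[of z] by (simp add: z mult.commute)
qed simp

lemma integral_sin_int_freq:
  assumes "w \<in> \<int>"
  shows "integral {0..2*pi} (\<lambda>t. sin (w * t)) = 0"
proof (cases "w = 0")
  case False
  from assms obtain z where z: "w = of_int z"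
    by (rule Ints_cases)
  from False have "integral {0..2*pi} (\<lambda>t. sin (w * t))
      = - cos (w * (2*pi)) / w - (- cos (w * 0) / w)"
    by (intro integral_derivative_eq_diff) (auto intro!: derivative_eq_intros)
  then show ?thesis
    using cos_int_2pin[of z] by (simp add: z mult.commute)
qed simp

definition cos_sq_integral :: "nat \<Rightarrow> real" where
  "cos_sq_integral n = (if n = 0 then 2 * pi else pi)"

lemma cos_sq_integral_pos: "0 < cos_sq_integral n"
  by (simp add: cos_sq_integral_def)

lemma integral_cos_cos:
  "integral {0..2*pi} (\<lambda>t. cos (real a * t) * cos (real b * t))
     = (if a = b then cos_sq_integral a else 0)"
proof -
  have "cos (real a * t) * cos (real b * t)
      = cos ((real a - real b) * t) / 2 + cos ((real a + real b) * t) / 2" for t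
    by (simp add: cos_times_cos left_diff_distrib distrib_right add_divide_distrib)
  then show ?thesis
    by (simp add: integral_add integrable_continuous_UNIV continuous_intros integral_cos_int_freq
        Ints_diff Ints_add cos_sq_integral_def)
qed

lemma integral_sin_sin:
  "integral {0..2*pi} (\<lambda>t. sin (real a * t) * sin (real b * t))
     = (if a = b \<and> a \<noteq> 0 then pi else 0)"
proof -
  have "sin (real a * t) * sin (real b * t)
      = cos ((real a - real b) * t) / 2 - cos ((real a + real b) * t) / 2" for t
    by (simp add: sin_times_sin left_diff_distrib distrib_right diff_divide_distrib)
  then show ?thesis
    by (simp add: integral_diff integrable_continuous_UNIV continuous_intros integral_cos_int_freq
        Ints_diff)
qed

lemma integral_cos_sin:
  "integral {0..2*pi} (\<lambda>t. cos (real a * t) * sin (real b * t)) = 0"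
proof -
  have "cos (real a * t) * sin (real b * t)
      = sin ((real a + real b) * t) / 2 - sin ((real a - real b) * t) / 2" for t
    by (simp add: cos_times_sin left_diff_distrib distrib_right diff_divide_distrib)
  then show ?thesis
    by (simp add: integral_diff integrable_continuous_UNIV continuous_intros integral_sin_int_freq
        Ints_diff Ints_add)
qed

section \<open>Fourier coefficients and Bessel's inequality\<close>

definition fourier_cos :: "nat \<Rightarrow> (real \<Rightarrow> real) \<Rightarrow> real" where
  "fourier_cos n h = integral {0..2*pi} (\<lambda>t. h t * cos (real n * t))"

definition fourier_sin :: "nat \<Rightarrow> (real \<Rightarrow> real) \<Rightarrow> real" where
  "fourier_sin n h = integral {0..2*pi} (\<lambda>t. h t * sin (real n * t))"

definition fourier_energy :: "nat \<Rightarrow> (real \<Rightarrow> real) \<Rightarrow> real" where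
  "fourier_energy n h = ((fourier_cos n h)\<^sup>2 + (fourier_sin n h)\<^sup>2) / cos_sq_integral n"

lemma fourier_sin_0 [simp]: "fourier_sin 0 h = 0"
  by (simp add: fourier_sin_def)

lemma fourier_energy_0: "fourier_energy 0 h = (integral {0..2*pi} h)\<^sup>2 / (2 * pi)"
  by (simp add: fourier_energy_def fourier_cos_def cos_sq_integral_def)

lemma fourier_energy_nonneg: "0 \<le> fourier_energy n h"
  by (simp add: fourier_energy_def cos_sq_integral_pos less_imp_le)

definition trig_sum :: "nat \<Rightarrow> (nat \<Rightarrow> real) \<Rightarrow> (nat \<Rightarrow> real) \<Rightarrow> real \<Rightarrow> real" where
  "trig_sum N a b t = (\<Sum>n<N. a n * cos (real n * t) + b n * sin (real n * t))"

lemma continuous_on_trig_sum [continuous_intros]: "continuous_on S (trig_sum N a b)"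
  unfolding trig_sum_def by (intro continuous_intros)

lemma integral_trig_sum_sq:
  "integral {0..2*pi} (\<lambda>t. (trig_sum N a b t)\<^sup>2)
     = (\<Sum>n<N. (a n)\<^sup>2 * cos_sq_integral n + (if n = 0 then 0 else (b n)\<^sup>2 * pi))"
proof -
  define mode where "mode n t = a n * cos (real n * t) + b n * sin (real n * t)" for n t
  have orthogonal: "integral {0..2*pi} (\<lambda>t. mode i t * mode j t)
      = (if i = j then (a i)\<^sup>2 * cos_sq_integral i + (if i = 0 then 0 else (b i)\<^sup>2 * pi) else 0)"
    for i j
  proof -
    have "mode i t * mode j t
        = a i * a j * (cos (real i * t) * cos (real j * t))
          + a i * b j * (cos (real i * t) * sin (real j * t))
          + b i * a j * (cos (real j * t) * sin (real i * t))
          + b i * b j * (sin (real i * t) * sin (real j * t))" for t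
      by (simp add: mode_def algebra_simps)
    then show ?thesis
      by (simp add: integral_add integrable_continuous_UNIV continuous_intros
          integral_cos_cos integral_cos_sin integral_sin_sin power2_eq_square)
  qed
  have "(\<lambda>t. (trig_sum N a b t)\<^sup>2) = (\<lambda>t. \<Sum>i<N. \<Sum>j<N. mode i t * mode j t)"
    by (simp add: trig_sum_def mode_def power2_eq_square sum_product)
  then have "integral {0..2*pi} (\<lambda>t. (trig_sum N a b t)\<^sup>2)
      = (\<Sum>i<N. \<Sum>j<N. integral {0..2*pi} (\<lambda>t. mode i t * mode j t))"
    by (simp add: integral_sum integrable_sum integrable_continuous_UNIV continuous_intros mode_def)
  then show ?thesis
    by (simp add: orthogonal)
qed

lemma integral_mult_trig_sum:
  assumes "continuous_on UNIV h"
  shows "integral {0..2*pi} (\<lambda>t. h t * trig_sum N a b t)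
    = (\<Sum>n<N. a n * fourier_cos n h + b n * fourier_sin n h)"
proof -
  have "h t * trig_sum N a b t
      = (\<Sum>n<N. a n * (h t * cos (real n * t)) + b n * (h t * sin (real n * t)))" for t
    by (simp add: trig_sum_def sum_distrib_left algebra_simps)
  with assms show ?thesis
    by (simp add: fourier_cos_def fourier_sin_def integral_sum integral_add
        integrable_continuous_UNIV continuous_intros)
qed

lemma integral_square_diff_trig_sum:
  assumes "continuous_on UNIV h"
  shows "integral {0..2*pi} (\<lambda>t. (h t - trig_sum N a b t)\<^sup>2)
    = integral {0..2*pi} (\<lambda>t. (h t)\<^sup>2) - (\<Sum>n<N. fourier_energy n h)
      + (\<Sum>n<N. (cos_sq_integral n * a n - fourier_cos n h)\<^sup>2 / cos_sq_integral n
                + (if n = 0 then 0 else (pi * b n - fourier_sin n h)\<^sup>2 / pi))"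
proof -
  have "integral {0..2*pi} (\<lambda>t. (h t - trig_sum N a b t)\<^sup>2)
      = integral {0..2*pi} (\<lambda>t. (h t)\<^sup>2) - 2 * integral {0..2*pi} (\<lambda>t. h t * trig_sum N a b t)
        + integral {0..2*pi} (\<lambda>t. (trig_sum N a b t)\<^sup>2)"
    using assms by (simp add: power2_diff integral_add integral_diff integrable_continuous_UNIV
        continuous_intros mult.assoc)
  also have "\<dots> = integral {0..2*pi} (\<lambda>t. (h t)\<^sup>2)
      + (\<Sum>n<N. (a n)\<^sup>2 * cos_sq_integral n + (if n = 0 then 0 else (b n)\<^sup>2 * pi)
                - 2 * (a n * fourier_cos n h + b n * fourier_sin n h))"
    by (simp add: integral_mult_trig_sum[OF assms] integral_trig_sum_sq sum_subtractf
        sum_distrib_left)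
  also have "\<dots> = integral {0..2*pi} (\<lambda>t. (h t)\<^sup>2) - (\<Sum>n<N. fourier_energy n h)
      + (\<Sum>n<N. (cos_sq_integral n * a n - fourier_cos n h)\<^sup>2 / cos_sq_integral n
                + (if n = 0 then 0 else (pi * b n - fourier_sin n h)\<^sup>2 / pi))"
  proof -
    have "(a n)\<^sup>2 * cos_sq_integral n + (if n = 0 then 0 else (b n)\<^sup>2 * pi)
          - 2 * (a n * fourier_cos n h + b n * fourier_sin n h)
        = (cos_sq_integral n * a n - fourier_cos n h)\<^sup>2 / cos_sq_integral n
          + (if n = 0 then 0 else (pi * b n - fourier_sin n h)\<^sup>2 / pi) - fourier_energy n h" for n
      by (cases "n = 0")
        (simp_all add: fourier_energy_def cos_sq_integral_def power2_eq_square field_simps)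
    then show ?thesis
      by (simp add: sum.distrib sum_subtractf)
  qed
  finally show ?thesis .
qed

lemma bessel_inequality:
  assumes "continuous_on UNIV h"
  shows "(\<Sum>n<N. fourier_energy n h) \<le> integral {0..2*pi} (\<lambda>t. (h t)\<^sup>2)"
proof -
  define a where "a n = fourier_cos n h / cos_sq_integral n" for n
  define b where "b n = fourier_sin n h / pi" for n
  have "0 \<le> integral {0..2*pi} (\<lambda>t. (h t - trig_sum N a b t)\<^sup>2)"
    using assms
    by (intro integral_nonneg) (auto intro!: integrable_continuous_UNIV continuous_intros)
  also have "\<dots> = integral {0..2*pi} (\<lambda>t. (h t)\<^sup>2) - (\<Sum>n<N. fourier_energy n h)"
    by (simp add: integral_square_diff_trig_sum[OF assms] a_def b_def cos_sq_integral_pos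
        less_imp_neq[symmetric] cong: if_cong)
  finally show ?thesis
    by simp
qed

lemma parseval_of_trig_approx:
  assumes h: "continuous_on UNIV h"
    and approx: "\<And>e. 0 < e \<Longrightarrow> \<exists>N a b. \<forall>t\<in>{0..2*pi}. \<bar>h t - trig_sum N a b t\<bar> \<le> e"
  shows "(\<lambda>n. fourier_energy n h) sums integral {0..2*pi} (\<lambda>t. (h t)\<^sup>2)"
proof -
  let ?E = "\<lambda>n. fourier_energy n h" and ?I = "integral {0..2*pi} (\<lambda>t. (h t)\<^sup>2)"
  have summable: "summable ?E"
    using bessel_inequality[OF h] by (intro summableI_nonneg_bounded fourier_energy_nonneg)
  have "?I \<le> suminf ?E + d" if "0 < d" for d
  proof -
    define e where "e = sqrt (d / (2 * pi))"
    have "0 < e"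
      using \<open>0 < d\<close> by (simp add: e_def)
    then obtain N a b where close: "\<forall>t\<in>{0..2*pi}. \<bar>h t - trig_sum N a b t\<bar> \<le> e"
      using approx by blast
    have "?I - (\<Sum>n<N. ?E n) \<le> integral {0..2*pi} (\<lambda>t. (h t - trig_sum N a b t)\<^sup>2)"
      by (simp add: integral_square_diff_trig_sum[OF h] sum_nonneg cos_sq_integral_pos less_imp_le)
    also have "\<dots> \<le> integral {0..2*pi} (\<lambda>t. e\<^sup>2)"
    proof (intro integral_le)
      show "(h t - trig_sum N a b t)\<^sup>2 \<le> e\<^sup>2" if "t \<in> {0..2*pi}" for t
        using close that \<open>0 < e\<close> abs_le_square_iff[of "h t - trig_sum N a b t" e] by simp
    qed (use h in \<open>auto intro!: integrable_continuous_UNIV continuous_intros\<close>)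
    also have "\<dots> = d"
      using \<open>0 < d\<close> by (simp add: e_def)
    finally show ?thesis
      using sum_le_suminf[OF summable, of "{..<N}"] fourier_energy_nonneg by fastforce
  qed
  then have "?I \<le> suminf ?E"
    by (rule field_le_epsilon)
  moreover have "suminf ?E \<le> ?I"
    using summable bessel_inequality[OF h] by (rule suminf_le_const)
  ultimately show ?thesis
    using summable by (simp add: sums_iff)
qed

section \<open>Density of trigonometric polynomials and Parseval's identity\<close>

inductive trig_poly :: "(real \<Rightarrow> real) \<Rightarrow> bool" where
  cos: "trig_poly (\<lambda>t. cos (real n * t))"
| sin: "trig_poly (\<lambda>t. sin (real n * t))"
| cmult: "trig_poly T \<Longrightarrow> trig_poly (\<lambda>t. c * T t)"
| add: "trig_poly T \<Longrightarrow> trig_poly U \<Longrightarrow> trig_poly (\<lambda>t. T t + U t)"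

lemma trig_poly_eq: "trig_poly T \<Longrightarrow> (\<And>t. T t = U t) \<Longrightarrow> trig_poly U"
proof -
  assume "trig_poly T" and "\<And>t. T t = U t"
  moreover from this(2) have "T = U" ..
  ultimately show ?thesis by simp
qed

lemma trig_poly_cos_int_freq: "trig_poly (\<lambda>t. cos (of_int z * t))"
proof (cases z rule: int_cases)
  case (nonneg n)
  then show ?thesis
    using trig_poly.cos[of n] by simp
next
  case (neg n)
  have "of_int z * t = - (real (Suc n) * t)" for t
    by (simp add: neg algebra_simps)
  then show ?thesis
    using trig_poly.cos[of "Suc n"] by (simp only: cos_minus)
qed

lemma trig_poly_sin_int_freq: "trig_poly (\<lambda>t. sin (of_int z * t))"
proof (cases z rule: int_cases)
  case (nonneg n)
  then show ?thesis
    using trig_poly.sin[of n] by simp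
next
  case (neg n)
  have "of_int z * t = - (real (Suc n) * t)" for t
    by (simp add: neg algebra_simps)
  then show ?thesis
    using trig_poly.cmult[OF trig_poly.sin[of "Suc n"], of "-1"]
    by (simp only: sin_minus mult_minus1)
qed

lemma trig_poly_mult_modes:
  "trig_poly (\<lambda>t. cos (real a * t) * cos (real b * t))"
  "trig_poly (\<lambda>t. sin (real a * t) * sin (real b * t))"
  "trig_poly (\<lambda>t. sin (real a * t) * cos (real b * t))"
  "trig_poly (\<lambda>t. cos (real a * t) * sin (real b * t))"
proof -
  let ?d = "of_int (int a - int b) :: real" and ?s = "of_int (int a + int b) :: real"
  have cos: "trig_poly (\<lambda>t. c * cos (?d * t) + d * cos (?s * t))"
    and sin: "trig_poly (\<lambda>t. c * sin (?d * t) + d * sin (?s * t))" for c d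
    by (intro trig_poly.intros trig_poly_cos_int_freq trig_poly_sin_int_freq)+
  show "trig_poly (\<lambda>t. cos (real a * t) * cos (real b * t))"
    by (rule trig_poly_eq[OF cos[of "1/2" "1/2"]])
      (simp add: cos_times_cos left_diff_distrib distrib_right)
  show "trig_poly (\<lambda>t. sin (real a * t) * sin (real b * t))"
    by (rule trig_poly_eq[OF cos[of "1/2" "-1/2"]])
      (simp add: sin_times_sin left_diff_distrib distrib_right)
  show "trig_poly (\<lambda>t. sin (real a * t) * cos (real b * t))"
    by (rule trig_poly_eq[OF sin[of "1/2" "1/2"]])
      (simp add: sin_times_cos left_diff_distrib distrib_right)
  show "trig_poly (\<lambda>t. cos (real a * t) * sin (real b * t))"
    by (rule trig_poly_eq[OF sin[of "-1/2" "1/2"]])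
      (simp add: cos_times_sin left_diff_distrib distrib_right)
qed

lemma trig_poly_mult_mode:
  assumes "trig_poly U"
  shows "trig_poly (\<lambda>t. cos (real a * t) * U t) \<and> trig_poly (\<lambda>t. sin (real a * t) * U t)"
  using assms
proof induction
  case (cmult T c)
  have "trig_poly (\<lambda>t. c * (cos (real a * t) * T t))" "trig_poly (\<lambda>t. c * (sin (real a * t) * T t))"
    using cmult.IH by (auto intro: trig_poly.cmult)
  then show ?case
    by (auto elim: trig_poly_eq)
next
  case (add T U)
  have "trig_poly (\<lambda>t. cos (real a * t) * T t + cos (real a * t) * U t)"
    "trig_poly (\<lambda>t. sin (real a * t) * T t + sin (real a * t) * U t)"
    using add.IH by (auto intro: trig_poly.add)
  then show ?case
    by (auto elim: trig_poly_eq simp: distrib_left)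
qed (simp_all add: trig_poly_mult_modes)

lemma trig_poly_mult:
  assumes "trig_poly T" and "trig_poly U"
  shows "trig_poly (\<lambda>t. T t * U t)"
  using assms(1)
proof induction
  case (cmult T c)
  show ?case
    using trig_poly.cmult[OF cmult.IH, of c] by (rule trig_poly_eq) (simp add: mult.assoc)
next
  case (add T1 T2)
  show ?case
    using trig_poly.add[OF add.IH] by (rule trig_poly_eq) (simp add: distrib_right)
qed (use trig_poly_mult_mode[OF assms(2)] in blast)+

lemma trig_sum_extend:
  "N \<le> M \<Longrightarrow> trig_sum N a b t
     = trig_sum M (\<lambda>n. if n < N then a n else 0) (\<lambda>n. if n < N then b n else 0) t"
  unfolding trig_sum_def by (rule sum.mono_neutral_cong_left) auto

lemma trig_sum_add:
  "trig_sum N a b t + trig_sum N a' b' t = trig_sum N (\<lambda>n. a n + a' n) (\<lambda>n. b n + b' n) t"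
  by (simp add: trig_sum_def sum.distrib[symmetric] algebra_simps)

lemma trig_poly_imp_trig_sum: "trig_poly T \<Longrightarrow> \<exists>N a b. T = trig_sum N a b"
proof (induction rule: trig_poly.induct)
  case (cos n)
  have "(\<lambda>t. cos (real n * t)) = trig_sum (Suc n) (\<lambda>k. if k = n then 1 else 0) (\<lambda>_. 0)"
    by (auto simp: trig_sum_def)
  then show ?case
    by blast
next
  case (sin n)
  have "(\<lambda>t. sin (real n * t)) = trig_sum (Suc n) (\<lambda>_. 0) (\<lambda>k. if k = n then 1 else 0)"
    by (auto simp: trig_sum_def)
  then show ?case
    by blast
next
  case (cmult T c)
  then obtain N a b where "T = trig_sum N a b"
    by blast
  then have "(\<lambda>t. c * T t) = trig_sum N (\<lambda>n. c * a n) (\<lambda>n. c * b n)"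
    by (auto simp: trig_sum_def sum_distrib_left algebra_simps)
  then show ?case
    by blast
next
  case (add T U)
  then obtain N a b M a' b' where T: "T = trig_sum N a b" and U: "U = trig_sum M a' b'"
    by blast
  let ?pad = "\<lambda>N c n. if n < N then c n else 0"
  have "T t + U t
      = trig_sum (N + M) (?pad N a) (?pad N b) t + trig_sum (N + M) (?pad M a') (?pad M b') t" for t
    unfolding T U using trig_sum_extend[of N "N + M"] trig_sum_extend[of M "N + M"] by simp
  then have "(\<lambda>t. T t + U t)
      = trig_sum (N + M) (\<lambda>n. ?pad N a n + ?pad M a' n) (\<lambda>n. ?pad N b n + ?pad M b' n)"
    by (simp add: trig_sum_add)
  then show ?case
    by blast
qed

lemma trig_poly_real_polynomial_function_cis:
  fixes g :: "complex \<Rightarrow> real"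
  assumes "real_polynomial_function g"
  shows "trig_poly (\<lambda>t. g (cis t))"
  using assms
proof induction
  case (linear g)
  then have "linear g"
    by (rule bounded_linear.linear)
  have decompose: "g z = Re z * g 1 + Im z * g \<i>" for z
  proof -
    have "z = Re z *\<^sub>R 1 + Im z *\<^sub>R \<i>"
      by (simp add: complex_eq_iff)
    then have "g z = g (Re z *\<^sub>R 1 + Im z *\<^sub>R \<i>)"
      by (rule arg_cong)
    also have "\<dots> = Re z * g 1 + Im z * g \<i>"
      using \<open>linear g\<close> by (simp add: linear_add linear_scale)
    finally show ?thesis .
  qed
  have on_circle: "g (cis t) = g 1 * cos (real 1 * t) + g \<i> * sin (real 1 * t)" for t
    using decompose[of "cis t"] by (simp add: mult.commute)
  have "trig_poly (\<lambda>t. g 1 * cos (real 1 * t) + g \<i> * sin (real 1 * t))"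
    by (intro trig_poly.intros)
  then show ?case
    by (rule trig_poly_eq) (simp add: on_circle)
next
  case (const c)
  show ?case
    by (rule trig_poly_eq[OF trig_poly.cmult[OF trig_poly.cos[of 0], of c]]) simp
qed (auto intro: trig_poly.add trig_poly_mult)

lemma periodic_eq_if_is_Arg:
  assumes periodic: "\<forall>t. h (t + 2*pi) = h t"
    and "z \<noteq> 0" and "is_Arg z r" and "is_Arg z s"
  shows "h r = h s"
proof -
  interpret periodic_fun_simple h "2*pi"
    using periodic by unfold_locales simp
  have "exp (\<i> * of_real r) = exp (\<i> * of_real s)"
    using assms(2-4) by (metis is_Arg_def mult_cancel_left norm_eq_zero of_real_eq_0_iff)
  then obtain k :: int where "\<i> * of_real r = \<i> * of_real s + of_int (2 * k) * pi * \<i>"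
    by (auto simp: exp_eq)
  then have "r = s + of_int k * (2 * pi)"
    by (simp add: complex_eq_iff)
  then show ?thesis
    by (simp add: plus_of_int)
qed

lemma periodic_Arg2pi_cis:
  assumes "\<forall>t. h (t + 2*pi) = h t"
  shows "h (Arg2pi (cis t)) = h t"
proof (rule periodic_eq_if_is_Arg[OF assms])
  show "is_Arg (cis t) (Arg2pi (cis t))"
    using Arg2pi by blast
  show "is_Arg (cis t) t"
    by (simp add: is_Arg_def cis_conv_exp)
qed simp

lemma continuous_on_periodic_Arg2pi:
  assumes h: "continuous_on UNIV h" and periodic: "\<forall>t. h (t + 2*pi) = h t"
  shows "continuous_on (sphere 0 1) (\<lambda>z. h (Arg2pi z))"
proof (rule continuous_at_imp_continuous_on, intro ballI)
  fix z :: complex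
  assume z: "z \<in> sphere 0 1"
  have "isCont h x" for x
    using h by (simp add: continuous_on_eq_continuous_at)
  show "isCont (\<lambda>z. h (Arg2pi z)) z"
  proof (cases "z \<in> \<real>\<^sub>\<ge>\<^sub>0")
    case False
    then show ?thesis
      by (intro continuous_at_compose[unfolded o_def, OF continuous_at_Arg2pi] \<open>isCont h _\<close>)
  next
    case True
    have "z \<noteq> 0"
      using z by auto
    \<comment> \<open>At the cut of \<open>Arg2pi\<close>, switch to \<open>Arg\<close>, whose cut is on the other side.\<close>
    from True \<open>z \<noteq> 0\<close> have "z \<notin> \<real>\<^sub>\<le>\<^sub>0"
      by (auto simp: complex_nonneg_Reals_iff complex_nonpos_Reals_iff complex_eq_iff)
    then have "isCont (\<lambda>z. h (Arg z)) z"
      by (intro continuous_at_compose[unfolded o_def, OF continuous_at_Arg] \<open>isCont h _\<close>)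
    moreover have "h (Arg2pi w) = h (Arg w)" for w
    proof (cases "w = 0")
      case False
      then show ?thesis
        using Arg2pi is_Arg_Arg by (blast intro: periodic_eq_if_is_Arg[OF periodic])
    qed (simp add: Arg_def)
    ultimately show ?thesis
      by simp
  qed
qed

lemma trig_sum_approx:
  assumes "continuous_on UNIV h" and periodic: "\<forall>t. h (t + 2*pi) = h t" and "0 < e"
  shows "\<exists>N a b. \<forall>t\<in>{0..2*pi}. \<bar>h t - trig_sum N a b t\<bar> \<le> e"
proof -
  obtain g where g: "real_polynomial_function g"
    and close: "\<And>z. z \<in> sphere 0 1 \<Longrightarrow> \<bar>h (Arg2pi z) - g z\<bar> < e"
    using Stone_Weierstrass_real_polynomial_function[OF compact_sphere
        continuous_on_periodic_Arg2pi[OF assms(1,2)] \<open>0 < e\<close>] by blast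
  obtain N a b where T: "(\<lambda>t. g (cis t)) = trig_sum N a b"
    using trig_poly_imp_trig_sum[OF trig_poly_real_polynomial_function_cis[OF g]] by blast
  have "\<bar>h t - trig_sum N a b t\<bar> \<le> e" for t
    using close[of "cis t"] periodic_Arg2pi_cis[OF periodic, of t] fun_cong[OF T, of t] by simp
  then show ?thesis
    by blast
qed

theorem parseval:
  assumes "continuous_on UNIV h" and "\<forall>t. h (t + 2*pi) = h t"
  shows "(\<lambda>n. fourier_energy n h) sums integral {0..2*pi} (\<lambda>t. (h t)\<^sup>2)"
  using assms by (intro parseval_of_trig_approx trig_sum_approx)

section \<open>Fourier coefficients of derivatives\<close>

lemma periodic_deriv:
  fixes h :: "real \<Rightarrow> real"
  assumes "\<And>x. h differentiable (at x)" and "\<forall>t. h (t + p) = h t"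
  shows "\<forall>t. deriv h (t + p) = deriv h t"
proof
  fix t
  have "(h has_real_derivative deriv h (t + p)) (at (t + p))"
    using assms(1) by (simp add: DERIV_deriv_iff_real_differentiable)
  then have "((\<lambda>s. h (s + p)) has_real_derivative deriv h (t + p) * 1) (at t)"
    by (rule DERIV_chain2) (auto intro!: derivative_eq_intros)
  moreover have "(\<lambda>s. h (s + p)) = h"
    using assms(2) by auto
  ultimately show "deriv h (t + p) = deriv h t"
    by (simp add: DERIV_imp_deriv)
qed

lemma fourier_coeffs_deriv:
  assumes diff: "\<And>x. h differentiable (at x)" and cont: "continuous_on UNIV (deriv h)"
    and periodic: "\<forall>t. h (t + 2*pi) = h t"
  shows "fourier_cos n (deriv h) = real n * fourier_sin n h"
    and "fourier_sin n (deriv h) = - real n * fourier_cos n h"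
proof -
  have deriv: "(h has_real_derivative deriv h x) (at x)" for x
    using diff by (simp add: DERIV_deriv_iff_real_differentiable)
  have "continuous_on UNIV h"
    using diff by (simp add: continuous_at_imp_continuous_on differentiable_imp_continuous_within)
  note integrable = integrable_continuous_UNIV continuous_intros this cont
  have boundary: "h (2*pi) = h 0" "cos (real n * (2*pi)) = 1" "sin (real n * (2*pi)) = 0"
    using periodic[rule_format, of 0] cos_2npi[of n] sin_2npi[of n] by (simp_all add: mult_ac)
  \<comment> \<open>Integration by parts; the boundary terms cancel by periodicity.\<close>
  have "integral {0..2*pi} (\<lambda>t. deriv h t * cos (real n * t) - h t * (real n * sin (real n * t)))
      = h (2*pi) * cos (real n * (2*pi)) - h 0 * cos (real n * 0)"
    by (rule integral_derivative_eq_diff) (auto intro!: derivative_eq_intros deriv)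
  then show "fourier_cos n (deriv h) = real n * fourier_sin n h"
    using boundary
    by (simp add: fourier_cos_def fourier_sin_def integral_diff integrable mult.left_commute)
  have "integral {0..2*pi} (\<lambda>t. deriv h t * sin (real n * t) + h t * (real n * cos (real n * t)))
      = h (2*pi) * sin (real n * (2*pi)) - h 0 * sin (real n * 0)"
    by (rule integral_derivative_eq_diff) (auto intro!: derivative_eq_intros deriv)
  then show "fourier_sin n (deriv h) = - real n * fourier_cos n h"
    using boundary
    by (simp add: fourier_cos_def fourier_sin_def integral_add integrable mult.left_commute)
qed

lemma fourier_energy_deriv:
  assumes "\<And>x. h differentiable (at x)" and "continuous_on UNIV (deriv h)"
    and "\<forall>t. h (t + 2*pi) = h t"
  shows "fourier_energy n (deriv h) = (real n)\<^sup>2 * fourier_energy n h"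
  by (simp add: fourier_energy_def fourier_coeffs_deriv[OF assms] power_mult_distrib
      distrib_left add_divide_distrib)

lemma fourier_cos_add:
  "continuous_on UNIV u \<Longrightarrow> continuous_on UNIV v \<Longrightarrow>
    fourier_cos n (\<lambda>t. u t + v t) = fourier_cos n u + fourier_cos n v"
  by (simp add: fourier_cos_def distrib_right integral_add integrable_continuous_UNIV
      continuous_intros)

lemma fourier_sin_add:
  "continuous_on UNIV u \<Longrightarrow> continuous_on UNIV v \<Longrightarrow>
    fourier_sin n (\<lambda>t. u t + v t) = fourier_sin n u + fourier_sin n v"
  by (simp add: fourier_sin_def distrib_right integral_add integrable_continuous_UNIV
      continuous_intros)

lemma nderiv_0 [simp]: "nderiv 0 f = f"
  by (simp add: nderiv_def)

lemma nderiv_Suc: "nderiv (Suc k) f = deriv (nderiv k f)"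
  by (simp add: nderiv_def)

locale periodic_C_class =
  fixes M :: nat and f :: "real \<Rightarrow> real"
  assumes smooth: "C_class M f" and periodic: "\<forall>t. f (t + 2*pi) = f t"
begin

lemma continuous_nderiv: "k \<le> M \<Longrightarrow> continuous_on UNIV (nderiv k f)"
  using smooth by (simp add: C_class_def)

lemma differentiable_nderiv: "k < M \<Longrightarrow> nderiv k f differentiable (at x)"
  using smooth by (simp add: C_class_def)

lemma periodic_nderiv: "k \<le> M \<Longrightarrow> \<forall>t. nderiv k f (t + 2*pi) = nderiv k f t"
proof (induction k)
  case (Suc k)
  then show ?case
    unfolding nderiv_Suc by (intro periodic_deriv differentiable_nderiv) auto
qed (simp add: periodic)

lemma fourier_coeffs_nderiv_Suc:
  assumes "k < M"
  shows "fourier_cos n (nderiv (Suc k) f) = real n * fourier_sin n (nderiv k f)"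
    and "fourier_sin n (nderiv (Suc k) f) = - real n * fourier_cos n (nderiv k f)"
proof -
  have "\<And>x. nderiv k f differentiable (at x)"
    using assms by (rule differentiable_nderiv)
  moreover have "continuous_on UNIV (deriv (nderiv k f))"
    using assms continuous_nderiv[of "Suc k"] by (simp add: nderiv_Suc)
  moreover have "\<forall>t. nderiv k f (t + 2*pi) = nderiv k f t"
    using assms by (simp add: periodic_nderiv)
  ultimately show "fourier_cos n (nderiv (Suc k) f) = real n * fourier_sin n (nderiv k f)"
    and "fourier_sin n (nderiv (Suc k) f) = - real n * fourier_cos n (nderiv k f)"
    unfolding nderiv_Suc by (rule fourier_coeffs_deriv)+
qed

lemma fourier_energy_nderiv:
  "k \<le> M \<Longrightarrow> fourier_energy n (nderiv k f) = ((real n)\<^sup>2) ^ k * fourier_energy n f"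
proof (induction k)
  case (Suc k)
  then show ?case
    using continuous_nderiv[of "Suc k"]
    by (simp add: nderiv_Suc fourier_energy_deriv differentiable_nderiv periodic_nderiv)
qed simp

lemma sums_integral_nderiv_sq:
  "k \<le> M \<Longrightarrow> (\<lambda>n. ((real n)\<^sup>2) ^ k * fourier_energy n f)
     sums integral {0..2*pi} (\<lambda>t. (nderiv k f t)\<^sup>2)"
  using parseval[OF continuous_nderiv periodic_nderiv] by (simp add: fourier_energy_nderiv)

lemma sums_integral_nderiv_sq_diff:
  assumes "k < M"
  shows "(\<lambda>n. ((real n)\<^sup>2) ^ k * ((real n)\<^sup>2 - 1) * fourier_energy n f)
     sums integral {0..2*pi} (\<lambda>t. (nderiv (k + 1) f t)\<^sup>2 - (nderiv k f t)\<^sup>2)"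
proof -
  have integral_diff: "integral {0..2*pi} (\<lambda>t. (nderiv (k + 1) f t)\<^sup>2 - (nderiv k f t)\<^sup>2)
      = integral {0..2*pi} (\<lambda>t. (nderiv (k + 1) f t)\<^sup>2) - integral {0..2*pi} (\<lambda>t. (nderiv k f t)\<^sup>2)"
    using assms continuous_nderiv[of k] continuous_nderiv[of "k + 1"]
    by (intro integral_diff) (auto intro!: integrable_continuous_UNIV continuous_intros)
  show ?thesis
    unfolding integral_diff
    using sums_diff[OF sums_integral_nderiv_sq[of "k + 1"] sums_integral_nderiv_sq[of k]] assms
    by (simp add: algebra_simps)
qed

lemma sums_integral_nderiv_pair_sq:
  assumes "k + 2 \<le> M"
  shows "(\<lambda>n. ((real n)\<^sup>2) ^ k * ((real n)\<^sup>2 - 1)\<^sup>2 * fourier_energy n f)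
     sums integral {0..2*pi} (\<lambda>t. (nderiv (k + 2) f t + nderiv k f t)\<^sup>2)"
proof -
  let ?g = "\<lambda>t. nderiv (k + 2) f t + nderiv k f t"
  have cont: "continuous_on UNIV (nderiv (k + 2) f)" "continuous_on UNIV (nderiv k f)"
    using assms by (auto intro: continuous_nderiv)
  have coeffs: "fourier_cos n ?g = (1 - (real n)\<^sup>2) * fourier_cos n (nderiv k f)"
    "fourier_sin n ?g = (1 - (real n)\<^sup>2) * fourier_sin n (nderiv k f)" for n
    unfolding fourier_cos_add[OF cont] fourier_sin_add[OF cont]
    using assms fourier_coeffs_nderiv_Suc[of "Suc k" n] fourier_coeffs_nderiv_Suc[of k n]
    by (simp_all add: power2_eq_square algebra_simps)
  have "fourier_energy n ?g = ((real n)\<^sup>2 - 1)\<^sup>2 * fourier_energy n (nderiv k f)" for n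
    unfolding fourier_energy_def coeffs power_mult_distrib power2_commute[of 1]
    by (simp add: distrib_left add_divide_distrib)
  moreover have "(\<lambda>n. fourier_energy n ?g) sums integral {0..2*pi} (\<lambda>t. (?g t)\<^sup>2)"
    using assms cont periodic_nderiv[of k] periodic_nderiv[of "k + 2"]
    by (intro parseval) (auto intro: continuous_intros)
  ultimately show ?thesis
    using assms by (simp add: fourier_energy_nderiv mult_ac)
qed

end

section \<open>The polynomials P and P_m\<close>

lemma poly_eq_sum_coeff_lessThan:
  fixes p :: "'a::comm_semiring_1 poly"
  assumes "\<And>i. n \<le> i \<Longrightarrow> coeff p i = 0"
  shows "poly p x = (\<Sum>i<n. coeff p i * x ^ i)"
proof -
  have "poly p x = (\<Sum>i\<le>degree p. coeff p i * x ^ i)"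
    by (rule poly_altdef)
  also have "\<dots> = (\<Sum>i<n. coeff p i * x ^ i)"
    using assms by (intro sum.mono_neutral_cong) (auto simp: coeff_eq_0)
  finally show ?thesis .
qed

lemma degree_cpoly: "degree (cpoly m) \<le> m"
proof -
  have "degree (cpoly m) \<le> sum (degree \<circ> (\<lambda>j. [:- ((real j)\<^sup>2), 1:])) {1..m}"
    unfolding cpoly_def by (rule degree_prod_sum_le) simp
  then show ?thesis
    by (simp add: o_def)
qed

lemma degree_Ppoly: "degree (Ppoly m) \<le> m - 1"
proof -
  have "degree (Ppoly m) \<le> sum (degree \<circ> (\<lambda>j. [:- ((real j)\<^sup>2), 1:])) {2..m}"
    unfolding Ppoly_def by (rule degree_prod_sum_le) simp
  then show ?thesis
    by (simp add: o_def)
qed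

lemma poly_cpoly_eq_sum: "poly (cpoly m) x = (\<Sum>k\<le>m. cc m k * x ^ k)"
  unfolding cc_def lessThan_Suc_atMost[symmetric]
  using degree_cpoly[of m] by (intro poly_eq_sum_coeff_lessThan coeff_eq_0) simp

lemma poly_Ppoly_eq_sum: "1 \<le> m \<Longrightarrow> poly (Ppoly m) x = (\<Sum>k<m. lam m k * x ^ k)"
  unfolding lam_def using degree_Ppoly[of m] by (intro poly_eq_sum_coeff_lessThan coeff_eq_0) simp

lemma poly_cpoly_eq_Ppoly: "1 \<le> m \<Longrightarrow> poly (cpoly m) x = (x - 1) * poly (Ppoly m) x"
proof -
  assume "1 \<le> m"
  then have "{1..m} = insert 1 {2..m}"
    by auto
  then show ?thesis
    by (simp add: cpoly_def Ppoly_def algebra_simps)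
qed

lemma Ppoly_eq_Spoly: "Ppoly m = [:poly (Ppoly m) 1:] + [:-1, 1:] * Spoly m"
proof -
  have "[:-1, 1:] dvd Ppoly m - [:poly (Ppoly m) 1:]"
    by (simp add: poly_eq_0_iff_dvd[symmetric])
  then have "Spoly m * [:-1, 1:] = Ppoly m - [:poly (Ppoly m) 1:]"
    unfolding Spoly_def by (rule dvd_div_mult_self)
  then show ?thesis
    by (simp add: algebra_simps)
qed

lemma coeff_Spoly_eq_0:
  assumes "1 \<le> m" and "m - 1 \<le> i"
  shows "coeff (Spoly m) i = 0"
proof (cases "Spoly m = 0")
  case False
  have "1 + degree (Spoly m) = degree ([:-1, 1:] * Spoly m)"
    using False by (subst degree_mult_eq) auto
  also have "[:-1, 1:] * Spoly m = Ppoly m - [:poly (Ppoly m) 1:]"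
    using Ppoly_eq_Spoly[of m] by (metis add_diff_cancel_left')
  also have "degree \<dots> \<le> m - 1"
    using degree_diff_le_max[of "Ppoly m" "[:poly (Ppoly m) 1:]"] degree_Ppoly[of m] by simp
  finally show ?thesis
    using assms by (intro coeff_eq_0) simp
qed simp

lemma poly_Ppoly_eq_SS:
  assumes "1 \<le> m"
  shows "poly (Ppoly m) x = SS m 0 + (x - 1) * (\<Sum>k\<in>{1..m-1}. SS m k * x ^ (k - 1))"
proof -
  have "(\<Sum>k\<in>{1..m-1}. SS m k * x ^ (k - 1)) = (\<Sum>i<m-1. coeff (Spoly m) i * x ^ i)"
    by (simp add: sum.atLeast1_atMost_eq SS_def)
  also have "\<dots> = poly (Spoly m) x"
    using assms by (intro poly_eq_sum_coeff_lessThan[symmetric] coeff_Spoly_eq_0)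
  finally show ?thesis
    by (subst Ppoly_eq_Spoly) (simp add: SS_def algebra_simps)
qed

lemma sum_lessThan_split_first_power:
  fixes x :: "'a::comm_ring_1"
  assumes "1 \<le> m"
  shows "(\<Sum>k<m. g k * x ^ k) = g 0 + x * (\<Sum>k\<in>{1..m-1}. g k * x ^ (k - 1))"
proof -
  have "{..<m} = insert 0 {1..m-1}"
    using assms by auto
  moreover have "(\<Sum>k\<in>{1..m-1}. g k * x ^ k) = x * (\<Sum>k\<in>{1..m-1}. g k * x ^ (k - 1))"
    by (auto simp: sum_distrib_left power_eq_if mult_ac intro!: sum.cong)
  ultimately show ?thesis
    by simp
qed

lemma poly_cpoly_at_square:
  assumes "0 < n"
  shows "0 \<le> poly (cpoly m) ((real n)\<^sup>2)" and "n \<le> m \<Longrightarrow> poly (cpoly m) ((real n)\<^sup>2) = 0"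
proof -
  have poly: "poly (cpoly m) ((real n)\<^sup>2) = (\<Prod>j\<in>{1..m}. (real n)\<^sup>2 - (real j)\<^sup>2)"
    by (simp add: cpoly_def poly_prod)
  show "n \<le> m \<Longrightarrow> poly (cpoly m) ((real n)\<^sup>2) = 0"
    unfolding poly using assms by (intro prod_zero) auto
  show "0 \<le> poly (cpoly m) ((real n)\<^sup>2)"
  proof (cases "n \<le> m")
    case False
    then show ?thesis
      unfolding poly by (intro prod_nonneg) (auto intro!: power_mono)
  qed (use \<open>n \<le> m \<Longrightarrow> _\<close> in simp)
qed

section \<open>The three quantities as series over the Fourier modes\<close>

context periodic_C_class
begin

lemma sums_cc_energy:
  assumes "m + j \<le> M"
  shows "(\<lambda>n. ((real n)\<^sup>2) ^ j * (poly (cpoly m) ((real n)\<^sup>2) * fourier_energy n f))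
    sums (\<Sum>k\<le>m. cc m k * integral {0..2*pi} (\<lambda>t. (nderiv (k + j) f t)\<^sup>2))"
proof -
  have "(\<lambda>n. \<Sum>k\<le>m. cc m k * (((real n)\<^sup>2) ^ (k + j) * fourier_energy n f))
      sums (\<Sum>k\<le>m. cc m k * integral {0..2*pi} (\<lambda>t. (nderiv (k + j) f t)\<^sup>2))"
    using assms by (intro sums_sum sums_mult sums_integral_nderiv_sq) auto
  then show ?thesis
    by (simp add: poly_cpoly_eq_sum power_add sum_distrib_left sum_distrib_right mult_ac)
qed

lemma sums_lam_energy:
  assumes "1 \<le> m" and "m + j \<le> M"
  shows "(\<lambda>n. ((real n)\<^sup>2) ^ j * (poly (cpoly m) ((real n)\<^sup>2) * fourier_energy n f))
    sums (\<Sum>k<m. lam m k * integral {0..2*pi}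
            (\<lambda>t. (nderiv (k + j + 1) f t)\<^sup>2 - (nderiv (k + j) f t)\<^sup>2))"
proof -
  have "(\<lambda>n. \<Sum>k<m. lam m k * (((real n)\<^sup>2) ^ (k + j) * ((real n)\<^sup>2 - 1) * fourier_energy n f))
      sums (\<Sum>k<m. lam m k * integral {0..2*pi}
            (\<lambda>t. (nderiv (k + j + 1) f t)\<^sup>2 - (nderiv (k + j) f t)\<^sup>2))"
    using assms by (intro sums_sum sums_mult sums_integral_nderiv_sq_diff) auto
  then show ?thesis
    using assms by (simp add: poly_cpoly_eq_Ppoly poly_Ppoly_eq_sum power_add sum_distrib_left
        sum_distrib_right mult_ac)
qed

lemma sums_SS_energy:
  assumes "1 \<le> m" and "m \<le> M"
  shows "(\<lambda>n. poly (cpoly m) ((real n)\<^sup>2) * fourier_energy n f)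
    sums (SS m 0 * integral {0..2*pi} (\<lambda>t. (nderiv 1 f t)\<^sup>2 - (f t)\<^sup>2)
          + (\<Sum>k\<in>{1..m-1}. SS m k * integral {0..2*pi}
              (\<lambda>t. (nderiv (k + 1) f t + nderiv (k - 1) f t)\<^sup>2)))"
proof -
  have "(\<lambda>n. ((real n)\<^sup>2) ^ (k - 1) * ((real n)\<^sup>2 - 1)\<^sup>2 * fourier_energy n f)
      sums integral {0..2*pi} (\<lambda>t. (nderiv (k + 1) f t + nderiv (k - 1) f t)\<^sup>2)"
    if "k \<in> {1..m-1}" for k
  proof -
    from that have "k - 1 + 2 = k + 1"
      by simp
    with that assms show ?thesis
      using sums_integral_nderiv_pair_sq[of "k - 1"] by simp
  qed
  then have "(\<lambda>n. SS m 0 * (((real n)\<^sup>2) ^ 0 * ((real n)\<^sup>2 - 1) * fourier_energy n f)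
        + (\<Sum>k\<in>{1..m-1}. SS m k * (((real n)\<^sup>2) ^ (k - 1) * ((real n)\<^sup>2 - 1)\<^sup>2 * fourier_energy n f)))
      sums (SS m 0 * integral {0..2*pi} (\<lambda>t. (nderiv (0 + 1) f t)\<^sup>2 - (nderiv 0 f t)\<^sup>2)
          + (\<Sum>k\<in>{1..m-1}. SS m k * integral {0..2*pi}
              (\<lambda>t. (nderiv (k + 1) f t + nderiv (k - 1) f t)\<^sup>2)))"
    using assms by (intro sums_add sums_mult sums_sum sums_integral_nderiv_sq_diff) auto
  \<comment> \<open>Stated in the exact shape of the series above (hence \<open>y ^ 0\<close>), so that it rewrites it.\<close>
  moreover have "SS m 0 * (y ^ 0 * (y - 1) * E)
        + (\<Sum>k\<in>{1..m-1}. SS m k * (y ^ (k - 1) * (y - 1)\<^sup>2 * E))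
      = poly (cpoly m) y * E" for y E :: real
    using assms by (simp add: poly_cpoly_eq_Ppoly poly_Ppoly_eq_SS sum_distrib_left
        sum_distrib_right power2_eq_square algebra_simps)
  ultimately show ?thesis
    by (simp only: add_0 nderiv_0)
qed

lemma sums_SS_energy_shifted:
  assumes "1 \<le> m" and "m + 1 \<le> M"
  shows "(\<lambda>n. (real n)\<^sup>2 * (poly (cpoly m) ((real n)\<^sup>2) * fourier_energy n f))
    sums (SS m 0 * integral {0..2*pi} (\<lambda>t. (nderiv 1 f t)\<^sup>2 - (f t)\<^sup>2)
          + (\<Sum>k<m. SS m k * integral {0..2*pi} (\<lambda>t. (nderiv (k + 2) f t + nderiv k f t)\<^sup>2)))"
proof -
  have "(\<lambda>n. SS m 0 * (((real n)\<^sup>2) ^ 0 * ((real n)\<^sup>2 - 1) * fourier_energy n f)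
        + (\<Sum>k<m. SS m k * (((real n)\<^sup>2) ^ k * ((real n)\<^sup>2 - 1)\<^sup>2 * fourier_energy n f)))
      sums (SS m 0 * integral {0..2*pi} (\<lambda>t. (nderiv (0 + 1) f t)\<^sup>2 - (nderiv 0 f t)\<^sup>2)
          + (\<Sum>k<m. SS m k * integral {0..2*pi} (\<lambda>t. (nderiv (k + 2) f t + nderiv k f t)\<^sup>2)))"
    using assms by (intro sums_add sums_mult sums_sum sums_integral_nderiv_sq_diff
        sums_integral_nderiv_pair_sq) auto
  moreover have "SS m 0 * (y ^ 0 * (y - 1) * E) + (\<Sum>k<m. SS m k * (y ^ k * (y - 1)\<^sup>2 * E))
      = y * (poly (cpoly m) y * E)" for y E :: real
  proof -
    have "(\<Sum>k<m. SS m k * (y ^ k * (y - 1)\<^sup>2 * E)) = (y - 1)\<^sup>2 * E * (\<Sum>k<m. SS m k * y ^ k)"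
      by (simp add: sum_distrib_left mult_ac)
    then show ?thesis
      using assms by (simp add: sum_lessThan_split_first_power poly_cpoly_eq_Ppoly poly_Ppoly_eq_SS
          power2_eq_square algebra_simps)
  qed
  ultimately show ?thesis
    by (simp only: add_0 nderiv_0)
qed

end

lemma cpoly_energy_nonneg_gap:
  assumes "integral {0..2*pi} f = 0"
  shows "0 \<le> poly (cpoly m) ((real n)\<^sup>2) * fourier_energy n f"
    and "poly (cpoly m) ((real n)\<^sup>2) * fourier_energy n f \<noteq> 0 \<Longrightarrow> (real m + 1)\<^sup>2 \<le> (real n)\<^sup>2"
proof -
  have "fourier_energy 0 f = 0"
    using assms by (simp add: fourier_energy_0)
  then show "0 \<le> poly (cpoly m) ((real n)\<^sup>2) * fourier_energy n f"
    and "poly (cpoly m) ((real n)\<^sup>2) * fourier_energy n f \<noteq> 0 \<Longrightarrow> (real m + 1)\<^sup>2 \<le> (real n)\<^sup>2"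
    using poly_cpoly_at_square[of n m] fourier_energy_nonneg[of n f]
    by (cases "n = 0"; cases "n \<le> m"; auto intro!: power_mono)+
qed

lemma sums_spectral_gap:
  fixes G :: "nat \<Rightarrow> real"
  assumes "G sums S" and "(\<lambda>n. (real n)\<^sup>2 * G n) sums S'"
    and "\<And>n. 0 \<le> G n" and "\<And>n. G n \<noteq> 0 \<Longrightarrow> c \<le> (real n)\<^sup>2" and "0 < c"
  shows "S \<le> 1 / c * S'"
proof -
  have "c * G n \<le> (real n)\<^sup>2 * G n" for n
    using assms(3,4)[of n] by (cases "G n = 0") (auto intro: mult_right_mono)
  then have "c * S \<le> S'"
    using sums_mult[OF assms(1), of c] assms(2) by (rule sums_le)
  with \<open>0 < c\<close> show ?thesis
    by (simp add: field_simps)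
qed

lemma sums_nonneg: "(G :: nat \<Rightarrow> real) sums S \<Longrightarrow> (\<And>n. 0 \<le> G n) \<Longrightarrow> 0 \<le> S"
  using sums_le[of "\<lambda>_. 0" G 0 S] by simp

theorem proposition2p2:
  fixes m :: nat and f :: "real \<Rightarrow> real"
  assumes m: "m \<ge> 1"
    and smooth: "C_class m f"
    and periodic: "\<forall>t. f (t + 2 * pi) = f t"
    and mean0: "integral {0..2*pi} f = 0"
  defines "I \<equiv> \<lambda>g. integral {0..2*pi} g"
  shows
    "(0 \<le> (\<Sum>k\<le>m. cc m k * I (\<lambda>t. (nderiv k f t)^2))
      \<and> 0 \<le> (\<Sum>k<m. lam m k * I (\<lambda>t. (nderiv (k+1) f t)^2 - (nderiv k f t)^2))
      \<and> 0 \<le> SS m 0 * I (\<lambda>t. (nderiv 1 f t)^2 - (f t)^2)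
             + (\<Sum>k\<in>{1..m-1}. SS m k * I (\<lambda>t. (nderiv (k+1) f t + nderiv (k-1) f t)^2)))
     \<and>
     (C_class (m+1) f \<longrightarrow>
        (\<Sum>k\<le>m. cc m k * I (\<lambda>t. (nderiv k f t)^2))
          \<le> 1 / (real m + 1)^2 * (\<Sum>k\<le>m. cc m k * I (\<lambda>t. (nderiv (k+1) f t)^2))
      \<and> (\<Sum>k<m. lam m k * I (\<lambda>t. (nderiv (k+1) f t)^2 - (nderiv k f t)^2))
          \<le> 1 / (real m + 1)^2 *
             (\<Sum>k<m. lam m k * I (\<lambda>t. (nderiv (k+2) f t)^2 - (nderiv (k+1) f t)^2))
      \<and> SS m 0 * I (\<lambda>t. (nderiv 1 f t)^2 - (f t)^2)
             + (\<Sum>k\<in>{1..m-1}. SS m k * I (\<lambda>t. (nderiv (k+1) f t + nderiv (k-1) f t)^2))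
          \<le> 1 / (real m + 1)^2 *
             (SS m 0 * I (\<lambda>t. (nderiv 1 f t)^2 - (f t)^2)
              + (\<Sum>k<m. SS m k * I (\<lambda>t. (nderiv (k+2) f t + nderiv k f t)^2))))"
proof -
  interpret periodic_C_class m f
    using smooth periodic by unfold_locales
  note shifted = periodic_C_class.intro[OF _ periodic]
  define G where "G = (\<lambda>n. poly (cpoly m) ((real n)\<^sup>2) * fourier_energy n f)"
  have nonneg: "0 \<le> S" if "G sums S" for S
    using that by (rule sums_nonneg) (simp add: G_def cpoly_energy_nonneg_gap(1)[OF mean0])
  have gap: "S \<le> 1 / (real m + 1)^2 * S'"
    if "G sums S" and "(\<lambda>n. (real n)\<^sup>2 * G n) sums S'" for S S'
    using that cpoly_energy_nonneg_gap[OF mean0] by (intro sums_spectral_gap) (auto simp: G_def)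
  have a: "G sums (\<Sum>k\<le>m. cc m k * I (\<lambda>t. (nderiv k f t)^2))"
    and b: "G sums (\<Sum>k<m. lam m k * I (\<lambda>t. (nderiv (k+1) f t)^2 - (nderiv k f t)^2))"
    and c: "G sums (SS m 0 * I (\<lambda>t. (nderiv 1 f t)^2 - (f t)^2)
      + (\<Sum>k\<in>{1..m-1}. SS m k * I (\<lambda>t. (nderiv (k+1) f t + nderiv (k-1) f t)^2)))"
    using sums_cc_energy[of m 0] sums_lam_energy[OF m, of 0] sums_SS_energy[OF m]
    by (simp_all add: G_def I_def)
  have a': "(\<lambda>n. (real n)\<^sup>2 * G n) sums (\<Sum>k\<le>m. cc m k * I (\<lambda>t. (nderiv (k+1) f t)^2))"
    and b': "(\<lambda>n. (real n)\<^sup>2 * G n)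
      sums (\<Sum>k<m. lam m k * I (\<lambda>t. (nderiv (k+2) f t)^2 - (nderiv (k+1) f t)^2))"
    and c': "(\<lambda>n. (real n)\<^sup>2 * G n) sums (SS m 0 * I (\<lambda>t. (nderiv 1 f t)^2 - (f t)^2)
      + (\<Sum>k<m. SS m k * I (\<lambda>t. (nderiv (k+2) f t + nderiv k f t)^2)))"
    if "C_class (m+1) f"
    using periodic_C_class.sums_cc_energy[OF shifted[OF that], of m 1]
      periodic_C_class.sums_lam_energy[OF shifted[OF that] m, of 1]
      periodic_C_class.sums_SS_energy_shifted[OF shifted[OF that] m]
    by (simp_all add: G_def I_def)
  show ?thesis
    using nonneg[OF a] nonneg[OF b] nonneg[OF c] gap[OF a a'] gap[OF b b'] gap[OF c c']
    by blast
qed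

end
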